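(* Let $L_1',L_2'\subseteq\mathcal{P}$ be simple event logs, $bk\in\mathcal{A}^*$, $n\in\mathbb{N}_{\ge1}$, $M_1=ms^{L_1',n}(bk)$ and $M_2=ms^{L_2',n}(bk)$. Let $CG(M_1,M_2)$ be the set of pairs $(g_1',g_2')$ where $g_1'$ is a group of $M_1$, $g_2'$ is a group of $M_2$, and $g_1'\overset{n}{\sim}g_2'$, and set $C(M_1,M_2)=\sum_{(g_1',g_2')\in CG(M_1,M_2)}\big(|g_2'|-\min(|g_1'|,|g_2'|)\big)$. Then for every linker $f$ (w.r.t. $n$) from $L_1'$ to $L_2'$, at least $C(M_1,M_2)$ elements of $M_2$ are not of the form $f(p_1')$ with $p_1'\in M_1$; more precisely, for each $(g_1',g_2')\in CG(M_1,M_2)$, at least $|g_2'|-\min(|g_1'|,|g_2'|)$ elements of $g_2'$ are not images under $f$ of elements of $M_1$.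
   Context: $\mathcal{P}=\mathcal{C}\times\mathcal{A}^*\times\mathcal{S}$ is the set of simple process instances $p=(c,\sigma,s)$ (case id, sequence of activities, sensitive value) with projections $\pi_c,\pi_\sigma,\pi_s$; a simple event log is a finite $L\subseteq\mathcal{P}$ in which elements with equal case ids are equal. $\sqsubseteq$ is the (not necessarily contiguous) subsequence relation; $pref(\langle a_1,\dots,a_m\rangle)=\{\langle a_1,\dots,a_k\rangle\mid 1\le k\le m\}$; $LCS(\sigma_1,\sigma_2)$ is the set of longest common subsequences, $LCS^{\sigma_1}_{\sigma_2}$ their length, and $SCS^{\sigma_1}_{\sigma_2}$ the length of a shortest common super-sequence. Specialization: $p'\preceq_n p$ iff $\pi_\sigma(p')\sqsubseteq\pi_\sigma(p)$, $|\pi_\sigma(p)|\le|\pi_\sigma(p')|+n$, and $\pi_s(p)=\pi_s(p')$. Matching set: $ms^{L',n}(bk)=\{p'\in L'\mid \exists p\in\mathcal{P}: p'\preceq_n p \wedge bk\sqsubseteq\pi_\sigma(p)\}$. A group of a matching set $M$ is a nonempty set of the form $\{p\in M\mid \pi_s(p)=v\}$ for some $v\in\mathcal{S}$. Linker: a total injective function $f:L_1'\to L_2'$ such that for every $p_1'\in L_1'$ there exist $p_1,p_2\in\mathcal{P}$ with $p_1'\preceq_n p_1$, $f(p_1')\preceq_n p_2$, $\pi_s(p_1)=\pi_s(p_2)$, and $\pi_\sigma(p_1)\in pref(\pi_\sigma(p_2))$. Comparable sequences: $\sigma_1\overset{n}{\sim}\sigma_2$ iff $n\ge|\sigma_1|-LCS^{\sigma_1}_{\sigma_2}$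 in case some $\sigma\in LCS(\sigma_1,\sigma_2)$ lies in $pref(\sigma_2)$, and $n\ge SCS^{\sigma_1}_{\sigma_2}-\min(|\sigma_1|,|\sigma_2|)$ otherwise. Comparable process instances: $p_1\overset{n}{\sim}p_2$ iff $\pi_s(p_1)=\pi_s(p_2)$ and $\pi_\sigma(p_1)\overset{n}{\sim}\pi_\sigma(p_2)$. Comparable groups: $g_1'\overset{n}{\sim}g_2'$ iff $p_1'\overset{n}{\sim}p_2'$ for all $p_1'\in g_1'$, $p_2'\in g_2'$. *)

theory Defs
  imports Main "HOL-Library.Sublist"
begin

text \<open>Simple process instances: (case id, activity sequence, sensitive value).\<close>
type_synonym ('c,'a,'s) pinst = "'c \<times> 'a list \<times> 's"

definition pi_c :: "('c,'a,'s) pinst \<Rightarrow> 'c" where "pi_c p = fst p"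
definition pi_sigma :: "('c,'a,'s) pinst \<Rightarrow> 'a list" where "pi_sigma p = fst (snd p)"
definition pi_s :: "('c,'a,'s) pinst \<Rightarrow> 's" where "pi_s p = snd (snd p)"

definition simple_event_log :: "('c,'a,'s) pinst set \<Rightarrow> bool" where
  "simple_event_log L \<longleftrightarrow> finite L \<and> (\<forall>p\<in>L. \<forall>q\<in>L. pi_c p = pi_c q \<longrightarrow> p = q)"

definition pref :: "'a list \<Rightarrow> 'a list set" where
  "pref xs = {take k xs | k. 1 \<le> k \<and> k \<le> length xs}"

definition LCS :: "'a list \<Rightarrow> 'a list \<Rightarrow> 'a list set" where
  "LCS s1 s2 = {s. subseq s s1 \<and> subseq s s2 \<and>
      (\<forall>t. subseq t s1 \<and> subseq t s2 \<longrightarrow> length t \<le> length s)}"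

definition LCS_len :: "'a list \<Rightarrow> 'a list \<Rightarrow> nat" where
  "LCS_len s1 s2 = Max {length s | s. subseq s s1 \<and> subseq s s2}"

definition SCS_len :: "'a list \<Rightarrow> 'a list \<Rightarrow> nat" where
  "SCS_len s1 s2 = (LEAST k. \<exists>s. subseq s1 s \<and> subseq s2 s \<and> length s = k)"

definition specializes :: "nat \<Rightarrow> ('c,'a,'s) pinst \<Rightarrow> ('c,'a,'s) pinst \<Rightarrow> bool" where
  "specializes n p' p \<longleftrightarrow> subseq (pi_sigma p') (pi_sigma p) \<and>
      length (pi_sigma p) \<le> length (pi_sigma p') + n \<and> pi_s p = pi_s p'"

definition matching_set :: "('c,'a,'s) pinst set \<Rightarrow> nat \<Rightarrow> 'a list \<Rightarrow> ('c,'a,'s) pinst set" where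
  "matching_set L' n bk = {p' \<in> L'. \<exists>p. specializes n p' p \<and> subseq bk (pi_sigma p)}"

definition is_group :: "('c,'a,'s) pinst set \<Rightarrow> ('c,'a,'s) pinst set \<Rightarrow> bool" where
  "is_group M g \<longleftrightarrow> g \<noteq> {} \<and> (\<exists>v. g = {p \<in> M. pi_s p = v})"

definition linker :: "nat \<Rightarrow> ('c,'a,'s) pinst set \<Rightarrow> ('c,'a,'s) pinst set
    \<Rightarrow> (('c,'a,'s) pinst \<Rightarrow> ('c,'a,'s) pinst) \<Rightarrow> bool" where
  "linker n L1 L2 f \<longleftrightarrow> f ` L1 \<subseteq> L2 \<and> inj_on f L1 \<and>
     (\<forall>p1'\<in>L1. \<exists>p1 p2. specializes n p1' p1 \<and> specializes n (f p1') p2 \<and>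
        pi_s p1 = pi_s p2 \<and> pi_sigma p1 \<in> pref (pi_sigma p2))"

definition comparable_seq :: "nat \<Rightarrow> 'a list \<Rightarrow> 'a list \<Rightarrow> bool" where
  "comparable_seq n s1 s2 \<longleftrightarrow>
     (if \<exists>s\<in>LCS s1 s2. s \<in> pref s2
      then n \<ge> length s1 - LCS_len s1 s2
      else n \<ge> SCS_len s1 s2 - min (length s1) (length s2))"

definition comparable_pi :: "nat \<Rightarrow> ('c,'a,'s) pinst \<Rightarrow> ('c,'a,'s) pinst \<Rightarrow> bool" where
  "comparable_pi n p1 p2 \<longleftrightarrow> pi_s p1 = pi_s p2 \<and> comparable_seq n (pi_sigma p1) (pi_sigma p2)"

definition comparable_groups :: "nat \<Rightarrow> ('c,'a,'s) pinst set \<Rightarrow> ('c,'a,'s) pinst set \<Rightarrow> bool" where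
  "comparable_groups n g1 g2 \<longleftrightarrow> (\<forall>p1\<in>g1. \<forall>p2\<in>g2. comparable_pi n p1 p2)"

definition CG :: "nat \<Rightarrow> ('c,'a,'s) pinst set \<Rightarrow> ('c,'a,'s) pinst set
    \<Rightarrow> (('c,'a,'s) pinst set \<times> ('c,'a,'s) pinst set) set" where
  "CG n M1 M2 = {(g1, g2). is_group M1 g1 \<and> is_group M2 g2 \<and> comparable_groups n g1 g2}"

definition Cval :: "nat \<Rightarrow> ('c,'a,'s) pinst set \<Rightarrow> ('c,'a,'s) pinst set \<Rightarrow> nat" where
  "Cval n M1 M2 = (\<Sum>(g1, g2)\<in>CG n M1 M2. card g2 - min (card g1) (card g2))"

end

theory Submission
  imports Defs
begin

text \<open>A linker never changes the sensitive value, and comparable groups carry the same sensitive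
  value. Hence the elements of a group \<open>g\<^sub>2'\<close> of \<open>M\<^sub>2\<close> hit by \<open>f\<close> from \<open>M\<^sub>1\<close> are images of the
  comparable group \<open>g\<^sub>1'\<close>, so at most \<open>min |g\<^sub>1'| |g\<^sub>2'|\<close> of them are hit. Distinct groups of \<open>M\<^sub>2\<close> are
  disjoint and each determines its comparable partner, so these per-group counts add up inside
  \<open>M\<^sub>2\<close>.\<close>

lemma linker_pi_s:
  assumes "linker n L1 L2 f" and "p \<in> L1"
  shows "pi_s (f p) = pi_s p"
proof -
  from assms obtain p1 p2 where "specializes n p p1" "specializes n (f p) p2" "pi_s p1 = pi_s p2"
    unfolding linker_def by meson
  then show ?thesis unfolding specializes_def by simp
qed

lemma matching_set_subset: "matching_set L n bk \<subseteq> L"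
  unfolding matching_set_def by auto

lemma finite_matching_set: "simple_event_log L \<Longrightarrow> finite (matching_set L n bk)"
  unfolding simple_event_log_def by (auto intro: finite_subset[OF matching_set_subset])

lemma is_group_subset: "is_group M g \<Longrightarrow> g \<subseteq> M"
  unfolding is_group_def by auto

lemma is_group_nonempty: "is_group M g \<Longrightarrow> g \<noteq> {}"
  unfolding is_group_def by simp

lemma is_group_eq:
  assumes "is_group M g" and "p \<in> g"
  shows "g = {q \<in> M. pi_s q = pi_s p}"
  using assms unfolding is_group_def by auto

lemma is_group_disjoint:
  assumes "is_group M g" and "is_group M h" and "g \<noteq> h"
  shows "g \<inter> h = {}"
  using assms unfolding is_group_def by auto

lemma comparable_groups_pi_s:
  "comparable_groups n g1 g2 \<Longrightarrow> p1 \<in> g1 \<Longrightarrow> p2 \<in> g2 \<Longrightarrow> pi_s p1 = pi_s p2"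
  unfolding comparable_groups_def comparable_pi_def by blast

lemma CG_subset: "(g1, g2) \<in> CG n M1 M2 \<Longrightarrow> g1 \<subseteq> M1 \<and> g2 \<subseteq> M2"
  unfolding CG_def by (simp add: is_group_subset)

lemma is_group_snd_CG: "g2 \<in> snd ` CG n M1 M2 \<Longrightarrow> is_group M2 g2"
  unfolding CG_def by auto

lemma CG_same_value:
  assumes "(g1, g2) \<in> CG n M1 M2" and "p2 \<in> g2"
  shows "g1 = {q \<in> M1. pi_s q = pi_s p2}"
proof -
  from assms(1) have group: "is_group M1 g1" and comp: "comparable_groups n g1 g2"
    unfolding CG_def by auto
  from group obtain p1 where p1: "p1 \<in> g1" using is_group_nonempty by blast
  have "pi_s p1 = pi_s p2" using comp p1 assms(2) by (rule comparable_groups_pi_s)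
  then show ?thesis using is_group_eq[OF group p1] by simp
qed

lemma inj_on_snd_CG: "inj_on snd (CG n M1 M2)"
proof (rule inj_onI)
  fix x y assume x: "x \<in> CG n M1 M2" and y: "y \<in> CG n M1 M2" and eq: "snd x = snd y"
  obtain g1 g2 h1 where xy: "x = (g1, g2)" "y = (h1, g2)"
    using eq by (metis prod.collapse)
  from x xy have "is_group M2 g2" using is_group_snd_CG by force
  then obtain p2 where p2: "p2 \<in> g2" using is_group_nonempty by blast
  have "g1 = h1"
    using CG_same_value[OF x[unfolded xy(1)] p2] CG_same_value[OF y[unfolded xy(2)] p2] by simp
  with xy show "x = y" by simp
qed

lemma CG_linked_subset_image:
  assumes "linker n L1 L2 f" and "M1 \<subseteq> L1" and "(g1, g2) \<in> CG n M1 M2"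
  shows "g2 \<inter> f ` M1 \<subseteq> f ` g1"
proof
  fix q assume "q \<in> g2 \<inter> f ` M1"
  then obtain p where p: "p \<in> M1" "q = f p" "f p \<in> g2" by blast
  from p(1) assms(2) have "p \<in> L1" by blast
  then have "pi_s p = pi_s (f p)" using linker_pi_s[OF assms(1)] by simp
  then have "p \<in> g1" using CG_same_value[OF assms(3) p(3)] p(1) by simp
  with p(2) show "q \<in> f ` g1" by blast
qed

lemma card_Diff_ge_if_Int_image:
  assumes "finite A" and "finite B" and "A \<inter> C \<subseteq> f ` B"
  shows "card A - min (card B) (card A) \<le> card (A - C)"
proof -
  have "card (A \<inter> C) \<le> card (f ` B)" using assms by (simp add: card_mono)
  also have "\<dots> \<le> card B" using assms(2) by (rule card_image_le)
  finally have "card (A \<inter> C) \<le> card B" .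
  moreover have "card (A \<inter> C) \<le> card A" using assms(1) by (simp add: card_mono)
  moreover have "card (A - C) = card A - card (A \<inter> C)"
    using assms(1) by (simp add: card_Diff_subset_Int)
  ultimately show ?thesis by linarith
qed

lemma sum_card_disjoint_le:
  assumes "finite M" and "\<And>i. i \<in> I \<Longrightarrow> A i \<subseteq> M"
    and "\<And>i j. i \<in> I \<Longrightarrow> j \<in> I \<Longrightarrow> i \<noteq> j \<Longrightarrow> A i \<inter> A j = {}"
  shows "(\<Sum>i\<in>I. card (A i)) \<le> card M"
proof (cases "finite I")
  case True
  have "(\<Sum>i\<in>I. card (A i)) = card (\<Union>i\<in>I. A i)"
    using True assms by (intro card_UN_disjoint[symmetric]) (auto intro: finite_subset)
  also have "\<dots> \<le> card M" using assms by (intro card_mono) auto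
  finally show ?thesis .
qed simp

theorem theorem4:
  fixes L1 L2 :: "('c,'a,'s) pinst set" and bk :: "'a list" and n :: nat
    and f :: "('c,'a,'s) pinst \<Rightarrow> ('c,'a,'s) pinst"
  assumes "simple_event_log L1" and "simple_event_log L2" and "n \<ge> 1"
    and "linker n L1 L2 f"
  shows "card (matching_set L2 n bk - f ` matching_set L1 n bk)
           \<ge> Cval n (matching_set L1 n bk) (matching_set L2 n bk)
       \<and> (\<forall>(g1, g2)\<in>CG n (matching_set L1 n bk) (matching_set L2 n bk).
            card (g2 - f ` matching_set L1 n bk) \<ge> card g2 - min (card g1) (card g2))"
proof -
  define M1 where "M1 = matching_set L1 n bk"
  define M2 where "M2 = matching_set L2 n bk"
  have fin: "finite M1" "finite M2"
    unfolding M1_def M2_def using assms(1,2) by (simp_all add: finite_matching_set)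
  have group_bound: "card g2 - min (card g1) (card g2) \<le> card (g2 - f ` M1)"
    if cg: "(g1, g2) \<in> CG n M1 M2" for g1 g2
  proof (rule card_Diff_ge_if_Int_image)
    show "finite g2" "finite g1"
      using CG_subset[OF cg] fin by (auto intro: finite_subset)
    show "g2 \<inter> f ` M1 \<subseteq> f ` g1"
      by (rule CG_linked_subset_image[OF assms(4) _ cg]) (simp add: M1_def matching_set_subset)
  qed
  have "Cval n M1 M2 \<le> (\<Sum>(g1, g2)\<in>CG n M1 M2. card (g2 - f ` M1))"
    unfolding Cval_def using group_bound by (intro sum_mono) auto
  also have "\<dots> = (\<Sum>g2\<in>snd ` CG n M1 M2. card (g2 - f ` M1))"
    by (simp add: sum.reindex[OF inj_on_snd_CG] case_prod_beta)
  also have "\<dots> \<le> card (M2 - f ` M1)"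
  proof (rule sum_card_disjoint_le)
    show "finite (M2 - f ` M1)" using fin by simp
    show "g2 - f ` M1 \<subseteq> M2 - f ` M1" if "g2 \<in> snd ` CG n M1 M2" for g2
      using that CG_subset by force
    show "(g2 - f ` M1) \<inter> (h2 - f ` M1) = {}"
      if "g2 \<in> snd ` CG n M1 M2" "h2 \<in> snd ` CG n M1 M2" "g2 \<noteq> h2" for g2 h2
      using is_group_disjoint[OF that(1,2)[THEN is_group_snd_CG] that(3)] by blast
  qed
  finally have "Cval n M1 M2 \<le> card (M2 - f ` M1)" .
  with group_bound show ?thesis unfolding M1_def M2_def by blast
qed

end
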